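(* Under the standing setting below, assume moreover the regularity condition: there exists $c_r>0$ with $\|\nabla_y g(x,y)\|\le c_r\|\nabla h(x,y)\|$ for all $(x,y)$. Take $\rho(x,y)=\|\nabla h(x,y)\|^2$ and $C_0>0$; for an integer $K\ge1$ set $\alpha=K^{-1/3}$, $\gamma=\min\{\alpha,\frac{1}{L_f+\alpha L_h}\}$, let $(x_0,y_0)$ satisfy $h(x_0,y_0)\le\alpha^2C_0$, and run the Algorithm. Then for every $\epsilon>0$ there is $K=\mathcal{O}(\epsilon^{-3/2})$ such that some $t\in\{0,\dots,K-1\}$ satisfies $$\max\{\|\nabla_y g(x_t,y_t)\|^2,\ \|\nabla f_t+\lambda_t\nabla h_t\|^2\}\le\epsilon,$$ i.e. $(x_t,y_t,\lambda_t)$ is an $\epsilon$-KKT point of $\min_{(x,y)} f(x,y)$ s.t. $h(x,y)=0$.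
   Context: Standing setting. $f,g:\mathbb{R}^n\times\mathbb{R}^m\to\mathbb{R}$. $f$ is continuously differentiable, $\bar f:=\inf f>-\infty$, $\nabla f$ is $L_f$-Lipschitz, and $\|\nabla f\|\le C_f$ everywhere. $g$ is twice continuously differentiable, and $h(x,y):=\|\nabla_y g(x,y)\|^2$ is continuously differentiable with $\nabla h$ being $L_h$-Lipschitz ($L_h>0$). Write $\nabla h=(\nabla_x h,\nabla_y h)$, $f_k=f(x_k,y_k)$, $h_k=h(x_k,y_k)$, $\nabla f_k=\nabla f(x_k,y_k)$, $\nabla h_k=\nabla h(x_k,y_k)$, etc. Given $\rho\ge0$, $\alpha,\gamma>0$, $(x_0,y_0)$, the Algorithm iterates for $k\ge0$: $\lambda_k=\big[-\nabla_x h_k^\top\nabla_x f_k-\nabla_y h_k^\top\nabla_y f_k+\alpha\rho(x_k,y_k)\big]_+/(\|\nabla_x h_k\|^2+\|\nabla_y h_k\|^2)$ if $\nabla h_k\ne0$, $\lambda_k=0$ otherwise; $\Delta_k^x=-\nabla_x f_k-\lambda_k\nabla_x h_k$, $\Delta_k^y=-\nabla_y f_k-\lambda_k\nabla_y h_k$; $x_{k+1}=x_k+\gamma\Delta_k^x$, $y_{k+1}=y_k+\gamma\Delta_k^y$. A triple $(x,y,\lambda)\in\mathbb{R}^n\times\mathbb{R}^m\times\mathbb{R}$ is an $\epsilon$-KKT point of $\min f$ s.t. $h=0$ if $h(x,y)\le\epsilon$ and $\|\nabla f(x,y)+\lambda\nabla h(x,y)\|^2\le\epsilon$. *)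

theory Defs
  imports "HOL-Analysis.Analysis"
begin

definition alg_lambda ::
  "('p \<Rightarrow> ('a::real_inner \<times> 'b::real_inner)) \<Rightarrow> ('p \<Rightarrow> 'a \<times> 'b) \<Rightarrow> ('p \<Rightarrow> real) \<Rightarrow> real \<Rightarrow> 'p \<Rightarrow> real"
where
  "alg_lambda Df Dh \<rho> \<alpha> p =
     (if Dh p \<noteq> 0 then
        max 0 (- (fst (Dh p) \<bullet> fst (Df p)) - (snd (Dh p) \<bullet> snd (Df p)) + \<alpha> * \<rho> p)
          / ((norm (fst (Dh p)))\<^sup>2 + (norm (snd (Dh p)))\<^sup>2)
      else 0)"

primrec alg_iter ::
  "('a::real_inner \<times> 'b::real_inner \<Rightarrow> 'a \<times> 'b) \<Rightarrow> ('a \<times> 'b \<Rightarrow> 'a \<times> 'b) \<Rightarrow> ('a \<times> 'b \<Rightarrow> real)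
     \<Rightarrow> real \<Rightarrow> real \<Rightarrow> 'a \<times> 'b \<Rightarrow> nat \<Rightarrow> 'a \<times> 'b"
where
  "alg_iter Df Dh \<rho> \<alpha> \<gamma> p0 0 = p0"
| "alg_iter Df Dh \<rho> \<alpha> \<gamma> p0 (Suc k) =
     (let p = alg_iter Df Dh \<rho> \<alpha> \<gamma> p0 k;
          l = alg_lambda Df Dh \<rho> \<alpha> p;
          dx = - fst (Df p) - l *\<^sub>R fst (Dh p);
          dy = - snd (Df p) - l *\<^sub>R snd (Dh p)
      in (fst p + \<gamma> *\<^sub>R dx, snd p + \<gamma> *\<^sub>R dy))"

end

theory Submission
  imports Defs
begin

text \<open>With \<open>M = 1/(2 L\<^sub>h)\<close> and step size \<open>\<gamma> = \<alpha>\<close>, the merit function \<open>f + (M/\<alpha>) h\<close> decreases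
  along the iteration by \<open>\<alpha>/2 (\<parallel>\<Delta>\<^sub>k\<parallel>\<^sup>2 + M \<parallel>\<nabla>h\<^sub>k\<parallel>\<^sup>2)\<close> up to an error \<open>\<alpha>\<^sup>3 C\<^sub>f\<^sup>2 / M\<close>:
  the multiplier \<open>\<lambda>\<^sub>k\<close> is chosen exactly so that \<open>\<nabla>h\<^sub>k \<bullet> \<Delta>\<^sub>k \<le> -\<alpha> \<parallel>\<nabla>h\<^sub>k\<parallel>\<^sup>2\<close>, while its
  contribution to \<open>\<nabla>f\<^sub>k \<bullet> \<Delta>\<^sub>k\<close> costs at most \<open>\<alpha> (C\<^sub>f \<parallel>\<nabla>h\<^sub>k\<parallel> + \<alpha> \<parallel>\<nabla>h\<^sub>k\<parallel>\<^sup>2)\<close>.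
  Over \<open>K = \<alpha>\<^sup>-\<^sup>3\<close> steps the merit function drops by at most a constant (it starts below
  \<open>f(p\<^sub>0) + M C\<^sub>0\<close> and stays above \<open>inf f\<close>), so some iterate has
  \<open>\<parallel>\<Delta>\<^sub>t\<parallel>\<^sup>2 + M \<parallel>\<nabla>h\<^sub>t\<parallel>\<^sup>2 = O(\<alpha>\<^sup>2)\<close>. As \<open>\<Delta>\<^sub>t = -(\<nabla>f\<^sub>t + \<lambda>\<^sub>t \<nabla>h\<^sub>t)\<close> and the regularity
  condition bounds \<open>\<parallel>\<nabla>\<^sub>yg\<parallel>\<close> by \<open>\<parallel>\<nabla>h\<parallel>\<close>, both KKT residuals are \<open>O(K\<^sup>-\<^sup>2\<^sup>/\<^sup>3)\<close>,
  and \<open>K = O(\<epsilon>\<^sup>-\<^sup>3\<^sup>/\<^sup>2)\<close> suffices.\<close>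

definition alg_direction ::
  "('p \<Rightarrow> 'a::real_inner \<times> 'b::real_inner) \<Rightarrow> ('p \<Rightarrow> 'a \<times> 'b) \<Rightarrow> ('p \<Rightarrow> real) \<Rightarrow> real \<Rightarrow> 'p \<Rightarrow> 'a \<times> 'b"
where
  "alg_direction Df Dh \<rho> \<alpha> p = - Df p - alg_lambda Df Dh \<rho> \<alpha> p *\<^sub>R Dh p"

lemma alg_iter_Suc_direction:
  "alg_iter Df Dh \<rho> \<alpha> \<gamma> p0 (Suc k) =
     alg_iter Df Dh \<rho> \<alpha> \<gamma> p0 k + \<gamma> *\<^sub>R alg_direction Df Dh \<rho> \<alpha> (alg_iter Df Dh \<rho> \<alpha> \<gamma> p0 k)"
  by (simp add: alg_direction_def Let_def prod_eq_iff)

lemma norm_alg_direction: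
  "norm (alg_direction Df Dh \<rho> \<alpha> p) = norm (Df p + alg_lambda Df Dh \<rho> \<alpha> p *\<^sub>R Dh p)"
proof -
  have "alg_direction Df Dh \<rho> \<alpha> p = - (Df p + alg_lambda Df Dh \<rho> \<alpha> p *\<^sub>R Dh p)"
    by (simp add: alg_direction_def)
  then show ?thesis by (simp only: norm_minus_cancel)
qed

lemma alg_lambda_mult_sq_norm:
  fixes Df Dh :: "'p \<Rightarrow> 'a::real_inner \<times> 'b::real_inner"
  shows "alg_lambda Df Dh (\<lambda>p. (norm (Dh p))\<^sup>2) \<alpha> p * (norm (Dh p))\<^sup>2
           = max 0 (\<alpha> * (norm (Dh p))\<^sup>2 - Dh p \<bullet> Df p)"
proof -
  have "fst (Dh p) \<bullet> fst (Df p) + snd (Dh p) \<bullet> snd (Df p) = Dh p \<bullet> Df p"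
    by (simp add: inner_prod_def)
  moreover have "(norm (fst (Dh p)))\<^sup>2 + (norm (snd (Dh p)))\<^sup>2 = (norm (Dh p))\<^sup>2"
    by (simp add: norm_prod_def)
  ultimately show ?thesis
    unfolding alg_lambda_def by (auto simp: algebra_simps)
qed

lemma alg_lambda_eq_0:
  fixes Df Dh :: "'p \<Rightarrow> 'a::real_inner \<times> 'b::real_inner"
  assumes "\<alpha> * (norm (Dh p))\<^sup>2 \<le> Dh p \<bullet> Df p"
  shows "alg_lambda Df Dh (\<lambda>p. (norm (Dh p))\<^sup>2) \<alpha> p = 0"
  using alg_lambda_mult_sq_norm[of Df Dh \<alpha> p] assms
  by (cases "Dh p = 0") (auto simp: alg_lambda_def)

lemma inner_alg_direction:
  fixes Df Dh :: "'p \<Rightarrow> 'a::real_inner \<times> 'b::real_inner"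
  shows "Dh p \<bullet> alg_direction Df Dh (\<lambda>p. (norm (Dh p))\<^sup>2) \<alpha> p
           = min (- (Dh p \<bullet> Df p)) (- \<alpha> * (norm (Dh p))\<^sup>2)"
  using alg_lambda_mult_sq_norm[of Df Dh \<alpha> p]
  by (simp add: alg_direction_def inner_diff_right power2_norm_eq_inner)

lemma alg_lambda_mult_inner_alg_direction:
  fixes Df Dh :: "'p \<Rightarrow> 'a::real_inner \<times> 'b::real_inner"
  shows "- alg_lambda Df Dh (\<lambda>p. (norm (Dh p))\<^sup>2) \<alpha> p * (Dh p \<bullet> alg_direction Df Dh (\<lambda>p. (norm (Dh p))\<^sup>2) \<alpha> p)
           = \<alpha> * max 0 (\<alpha> * (norm (Dh p))\<^sup>2 - Dh p \<bullet> Df p)"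
proof (cases "\<alpha> * (norm (Dh p))\<^sup>2 \<le> Dh p \<bullet> Df p")
  case True
  then show ?thesis by (simp add: alg_lambda_eq_0)
next
  case False
  then show ?thesis
    using alg_lambda_mult_sq_norm[of Df Dh \<alpha> p] unfolding inner_alg_direction
    by (simp add: min_def flip: distrib_left)
qed

lemma descent_lemma:
  fixes F :: "'a::real_inner \<Rightarrow> real"
  assumes grad: "\<And>p. (F has_derivative (\<lambda>v. DF p \<bullet> v)) (at p)"
    and lip: "\<And>p q. norm (DF p - DF q) \<le> L * norm (p - q)"
  shows "F q \<le> F p + DF p \<bullet> (q - p) + L / 2 * (norm (q - p))\<^sup>2"
proof -
  define d where "d = q - p"
  define g where "g = (\<lambda>t. F (p + t *\<^sub>R d) - t * (DF p \<bullet> d) - L / 2 * t\<^sup>2 * (norm d)\<^sup>2)"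
  define g' where "g' = (\<lambda>t. (DF (p + t *\<^sub>R d) - DF p) \<bullet> d - L * t * (norm d)\<^sup>2)"
  have "g 1 \<le> g 0"
  proof (rule deriv_nonpos_imp_antimono[of 0 1 g g'])
    fix t :: real assume t: "t \<in> {0..1}"
    have "((\<lambda>t. F (p + t *\<^sub>R d)) has_derivative (\<lambda>s. DF (p + t *\<^sub>R d) \<bullet> (s *\<^sub>R d))) (at t)"
      by (rule has_derivative_compose[of "\<lambda>t. p + t *\<^sub>R d" _ t UNIV F, OF _ grad])
         (auto intro!: derivative_eq_intros)
    moreover have "(\<lambda>s. DF (p + t *\<^sub>R d) \<bullet> (s *\<^sub>R d)) = (*) (DF (p + t *\<^sub>R d) \<bullet> d)"
      by (simp add: fun_eq_iff)
    ultimately have "((\<lambda>t. F (p + t *\<^sub>R d)) has_real_derivative DF (p + t *\<^sub>R d) \<bullet> d) (at t)"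
      by (simp add: has_field_derivative_def)
    then show "(g has_real_derivative g' t) (at t)"
      unfolding g_def g'_def
      by (auto intro!: derivative_eq_intros simp: inner_diff_left)
    have "(DF (p + t *\<^sub>R d) - DF p) \<bullet> d \<le> norm (DF (p + t *\<^sub>R d) - DF p) * norm d"
      by (rule norm_cauchy_schwarz)
    also have "\<dots> \<le> L * norm (t *\<^sub>R d) * norm d"
      using lip[of "p + t *\<^sub>R d" p] by (simp add: mult_right_mono)
    also have "\<dots> = L * t * (norm d)\<^sup>2"
      using t by (simp add: power2_eq_square)
    finally show "g' t \<le> 0" unfolding g'_def by simp
  qed simp
  then show ?thesis unfolding g_def d_def by simp
qed

locale smooth_penalty_problem =
  fixes f h :: "'a::real_inner \<times> 'b::real_inner \<Rightarrow> real" and Df Dh :: "'a \<times> 'b \<Rightarrow> 'a \<times> 'b"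
    and Lf Lh Cf :: real
  assumes f_grad: "\<And>p. (f has_derivative (\<lambda>v. Df p \<bullet> v)) (at p)"
    and f_lip: "\<And>p q. norm (Df p - Df q) \<le> Lf * norm (p - q)"
    and f_bound: "\<And>p. norm (Df p) \<le> Cf"
    and h_grad: "\<And>p. (h has_derivative (\<lambda>v. Dh p \<bullet> v)) (at p)"
    and h_lip: "\<And>p q. norm (Dh p - Dh q) \<le> Lh * norm (p - q)"
begin

lemma alg_step_objective_le:
  fixes p :: "'a \<times> 'b"
  assumes "\<alpha> \<ge> 0"
  defines "\<Delta> \<equiv> alg_direction Df Dh (\<lambda>p. (norm (Dh p))\<^sup>2) \<alpha> p"
  shows "f (p + \<alpha> *\<^sub>R \<Delta>) \<le> f p - \<alpha> * (norm \<Delta>)\<^sup>2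
           + \<alpha>\<^sup>2 * (Cf * norm (Dh p) + \<alpha> * (norm (Dh p))\<^sup>2) + Lf / 2 * \<alpha>\<^sup>2 * (norm \<Delta>)\<^sup>2"
proof -
  define l where "l = alg_lambda Df Dh (\<lambda>p. (norm (Dh p))\<^sup>2) \<alpha> p"
  define u where "u = \<alpha> * max 0 (\<alpha> * (norm (Dh p))\<^sup>2 - Dh p \<bullet> Df p)"
  have "\<Delta> \<bullet> \<Delta> = (- Df p - l *\<^sub>R Dh p) \<bullet> \<Delta>"
    by (simp add: \<Delta>_def l_def alg_direction_def)
  moreover have "- l * (Dh p \<bullet> \<Delta>) = u"
    unfolding l_def u_def \<Delta>_def by (rule alg_lambda_mult_inner_alg_direction)
  ultimately have "Df p \<bullet> \<Delta> = - (norm \<Delta>)\<^sup>2 + u"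
    by (simp add: inner_diff_left power2_norm_eq_inner)
  moreover have "- (Dh p \<bullet> Df p) \<le> Cf * norm (Dh p)"
    using norm_cauchy_schwarz[of "- Dh p" "Df p"] mult_right_mono[OF f_bound[of p] norm_ge_zero[of "Dh p"]]
    by (simp add: mult.commute)
  then have "u \<le> \<alpha> * (Cf * norm (Dh p) + \<alpha> * (norm (Dh p))\<^sup>2)"
    unfolding u_def using \<open>\<alpha> \<ge> 0\<close> order_trans[OF norm_ge_zero f_bound[of p]]
    by (intro mult_left_mono) auto
  ultimately have "\<alpha> * (Df p \<bullet> \<Delta>) \<le> - \<alpha> * (norm \<Delta>)\<^sup>2 + \<alpha>\<^sup>2 * (Cf * norm (Dh p) + \<alpha> * (norm (Dh p))\<^sup>2)"
    using \<open>\<alpha> \<ge> 0\<close> mult_left_mono by (fastforce simp: algebra_simps power2_eq_square)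
  then show ?thesis
    using descent_lemma[OF f_grad f_lip, where p = p and q = "p + \<alpha> *\<^sub>R \<Delta>"] \<open>\<alpha> \<ge> 0\<close>
    by (simp add: power_mult_distrib)
qed

lemma alg_step_penalty_le:
  fixes p :: "'a \<times> 'b"
  assumes "\<alpha> \<ge> 0"
  defines "\<Delta> \<equiv> alg_direction Df Dh (\<lambda>p. (norm (Dh p))\<^sup>2) \<alpha> p"
  shows "h (p + \<alpha> *\<^sub>R \<Delta>) \<le> h p - \<alpha>\<^sup>2 * (norm (Dh p))\<^sup>2 + Lh / 2 * \<alpha>\<^sup>2 * (norm \<Delta>)\<^sup>2"
proof -
  have "\<alpha> * (Dh p \<bullet> \<Delta>) \<le> \<alpha> * (- \<alpha> * (norm (Dh p))\<^sup>2)"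
    using \<open>\<alpha> \<ge> 0\<close> unfolding \<Delta>_def inner_alg_direction by (intro mult_left_mono) auto
  then show ?thesis
    using descent_lemma[OF h_grad h_lip, where p = p and q = "p + \<alpha> *\<^sub>R \<Delta>"] \<open>\<alpha> \<ge> 0\<close>
    by (simp add: power_mult_distrib power2_eq_square algebra_simps)
qed

end

lemma exists_le_of_sum_le:
  fixes X :: "'i \<Rightarrow> real"
  assumes "finite A" "A \<noteq> {}" "sum X A \<le> real (card A) * B"
  shows "\<exists>t\<in>A. X t \<le> B"
proof (rule ccontr)
  assume "\<not> ?thesis"
  then have "(\<Sum>t\<in>A. B) < sum X A"
    using assms(1,2) by (intro sum_strict_mono) auto
  with assms(3) show False by simp
qed

lemma max_sq_le_weighted_sum:
  fixes a b r M c :: real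
  assumes "0 \<le> a" "a \<le> c * b" "M > 0"
  shows "max (a\<^sup>2) (r\<^sup>2) \<le> max 1 (c\<^sup>2 / M) * (r\<^sup>2 + M * b\<^sup>2)"
proof -
  have "a\<^sup>2 \<le> c\<^sup>2 / M * (M * b\<^sup>2)"
    using power_mono[OF assms(2,1)] assms(3) by (simp add: power_mult_distrib)
  also have "\<dots> \<le> max 1 (c\<^sup>2 / M) * (r\<^sup>2 + M * b\<^sup>2)"
    using assms(3) by (intro mult_mono) auto
  finally have a_le: "a\<^sup>2 \<le> max 1 (c\<^sup>2 / M) * (r\<^sup>2 + M * b\<^sup>2)" .
  have "r\<^sup>2 \<le> 1 * (r\<^sup>2 + M * b\<^sup>2)"
    using assms(3) by simp
  also have "\<dots> \<le> max 1 (c\<^sup>2 / M) * (r\<^sup>2 + M * b\<^sup>2)"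
    using assms(3) by (intro mult_right_mono) auto
  finally show ?thesis
    using a_le by simp
qed
locale penalty_step_parameters = smooth_penalty_problem +
  fixes \<alpha> M :: real and K :: nat
  assumes \<alpha>_pos: "\<alpha> > 0" and M_pos: "M > 0" and M_Lh: "M * Lh = 1/2"
    and \<alpha>_Lf: "Lf * \<alpha> \<le> 1/2" and \<alpha>_M: "\<alpha>\<^sup>2 \<le> M / 4" and K_\<alpha>: "real K * \<alpha> ^ 3 = 1"
begin

lemma K_pos: "K \<noteq> 0"
  using K_\<alpha> by (cases "K = 0") auto

lemma \<alpha>_le_1: "\<alpha> \<le> 1"
proof -
  have "\<alpha> ^ 3 * real K \<le> 1 * real K"
    using K_\<alpha> K_pos by (simp add: mult.commute)
  then have "\<alpha> ^ 3 \<le> 1" using K_pos by simp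
  then show ?thesis using \<alpha>_pos by (simp add: power_le_one_iff)
qed

lemma alg_step_merit_decrease:
  fixes p :: "'a \<times> 'b"
  defines "\<Delta> \<equiv> alg_direction Df Dh (\<lambda>p. (norm (Dh p))\<^sup>2) \<alpha> p"
  shows "f (p + \<alpha> *\<^sub>R \<Delta>) + M / \<alpha> * h (p + \<alpha> *\<^sub>R \<Delta>)
           \<le> f p + M / \<alpha> * h p - \<alpha> / 2 * ((norm \<Delta>)\<^sup>2 + M * (norm (Dh p))\<^sup>2) + \<alpha> ^ 3 * Cf\<^sup>2 / M"
proof -
  define x where "x = norm (Dh p)"
  define N where "N = (norm \<Delta>)\<^sup>2"
  have "f (p + \<alpha> *\<^sub>R \<Delta>) \<le> f p - \<alpha> * N + \<alpha>\<^sup>2 * (Cf * x + \<alpha> * x\<^sup>2) + Lf / 2 * \<alpha>\<^sup>2 * N"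
    using alg_step_objective_le[of \<alpha> p] \<alpha>_pos
    unfolding \<Delta>_def N_def x_def by simp
  also have "\<dots> = f p - \<alpha> * N + \<alpha>\<^sup>2 * Cf * x + \<alpha> ^ 3 * x\<^sup>2 + Lf / 2 * \<alpha>\<^sup>2 * N"
    by (simp add: algebra_simps power2_eq_square power3_eq_cube)
  finally have f_step: "f (p + \<alpha> *\<^sub>R \<Delta>) \<le> f p - \<alpha> * N + \<alpha>\<^sup>2 * Cf * x + \<alpha> ^ 3 * x\<^sup>2 + Lf / 2 * \<alpha>\<^sup>2 * N" .
  have "M / \<alpha> * h (p + \<alpha> *\<^sub>R \<Delta>) \<le> M / \<alpha> * (h p - \<alpha>\<^sup>2 * x\<^sup>2 + Lh / 2 * \<alpha>\<^sup>2 * N)"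
    using alg_step_penalty_le[of \<alpha> p] \<alpha>_pos M_pos
    unfolding \<Delta>_def N_def x_def by (intro mult_left_mono) auto
  also have "\<dots> = M / \<alpha> * h p - M * \<alpha> * x\<^sup>2 + (M * Lh) / 2 * \<alpha> * N"
    using \<alpha>_pos by (simp add: field_simps power2_eq_square)
  finally have h_step: "M / \<alpha> * h (p + \<alpha> *\<^sub>R \<Delta>) \<le> M / \<alpha> * h p - M * \<alpha> * x\<^sup>2 + \<alpha> * N / 4"
    using M_Lh by simp
  have "Lf / 2 * \<alpha>\<^sup>2 * N = (Lf * \<alpha>) * (\<alpha> * N) / 2"
    by (simp add: power2_eq_square)
  also have "\<dots> \<le> \<alpha> * N / 4"
    using mult_right_mono[OF \<alpha>_Lf, of "\<alpha> * N"] \<alpha>_pos by (simp add: N_def)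
  finally have curvature: "Lf / 2 * \<alpha>\<^sup>2 * N \<le> \<alpha> * N / 4" .
  have cubic: "\<alpha> ^ 3 * x\<^sup>2 \<le> M / 4 * \<alpha> * x\<^sup>2"
    using mult_right_mono[OF \<alpha>_M, of "\<alpha> * x\<^sup>2"] \<alpha>_pos
    by (simp add: power2_eq_square power3_eq_cube mult_ac)
  have "M / 4 * \<alpha> * x\<^sup>2 + \<alpha> ^ 3 * Cf\<^sup>2 / M - \<alpha>\<^sup>2 * Cf * x = \<alpha> * (M / 4) * (x - 2 * \<alpha> * Cf / M)\<^sup>2"
    using M_pos by (simp add: field_simps power2_eq_square power3_eq_cube)
  then have cross: "\<alpha>\<^sup>2 * Cf * x \<le> M / 4 * \<alpha> * x\<^sup>2 + \<alpha> ^ 3 * Cf\<^sup>2 / M"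
  proof -
    have "0 \<le> \<alpha> * (M / 4) * (x - 2 * \<alpha> * Cf / M)\<^sup>2" using \<alpha>_pos M_pos by simp
    with \<open>M / 4 * \<alpha> * x\<^sup>2 + _ - _ = _\<close> show ?thesis by linarith
  qed
  show ?thesis
    using f_step h_step curvature cubic cross
    unfolding N_def[symmetric] x_def[symmetric] by (simp add: algebra_simps)
qed

lemma alg_iter_residual_le:
  assumes f_bdd: "bdd_below (range f)" and h_nonneg: "\<And>p. h p \<ge> 0"
    and C0: "C0 \<ge> 0" and h_p0: "h p0 \<le> \<alpha>\<^sup>2 * C0" and f_p0: "f p0 - Inf (range f) \<le> D"
  defines "P \<equiv> alg_iter Df Dh (\<lambda>p. (norm (Dh p))\<^sup>2) \<alpha> \<alpha> p0"
  shows "\<exists>t<K. (norm (alg_direction Df Dh (\<lambda>p. (norm (Dh p))\<^sup>2) \<alpha> (P t)))\<^sup>2 + M * (norm (Dh (P t)))\<^sup>2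
                 \<le> 2 * (D + M * C0 + Cf\<^sup>2 / M) * \<alpha>\<^sup>2"
proof -
  define \<Phi> where "\<Phi> k = f (P k) + M / \<alpha> * h (P k)" for k
  define X where "X k = (norm (alg_direction Df Dh (\<lambda>p. (norm (Dh p))\<^sup>2) \<alpha> (P k)))\<^sup>2
                          + M * (norm (Dh (P k)))\<^sup>2" for k
  have "P (Suc k) = P k + \<alpha> *\<^sub>R alg_direction Df Dh (\<lambda>p. (norm (Dh p))\<^sup>2) \<alpha> (P k)" for k
    unfolding P_def by (rule alg_iter_Suc_direction)
  then have "\<Phi> (Suc k) - \<Phi> k \<le> \<alpha> ^ 3 * Cf\<^sup>2 / M - \<alpha> / 2 * X k" for k
    using alg_step_merit_decrease[of "P k"]
    unfolding \<Phi>_def X_def by simp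
  then have "\<Phi> K - \<Phi> 0 \<le> (\<Sum>k<K. \<alpha> ^ 3 * Cf\<^sup>2 / M - \<alpha> / 2 * X k)"
    unfolding sum_lessThan_telescope[symmetric] by (rule sum_mono)
  also have "\<dots> = Cf\<^sup>2 / M - \<alpha> / 2 * (\<Sum>k<K. X k)"
    using K_\<alpha> by (simp add: sum_subtractf sum_distrib_left flip: mult.assoc)
  finally have descent: "\<alpha> / 2 * (\<Sum>k<K. X k) \<le> \<Phi> 0 - \<Phi> K + Cf\<^sup>2 / M" by linarith
  have "Inf (range f) \<le> \<Phi> K"
    using cInf_lower[OF rangeI f_bdd, of "P K"] h_nonneg[of "P K"] M_pos \<alpha>_pos
    unfolding \<Phi>_def by (simp add: add_increasing2)
  moreover have "M / \<alpha> * h p0 \<le> M * C0"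
  proof -
    have "M / \<alpha> * h p0 \<le> M / \<alpha> * (\<alpha>\<^sup>2 * C0)"
      using h_p0 M_pos \<alpha>_pos by (intro mult_left_mono) auto
    also have "\<dots> = \<alpha> * (M * C0)"
      using \<alpha>_pos by (simp add: power2_eq_square)
    also have "\<dots> \<le> M * C0"
      using \<alpha>_le_1 \<alpha>_pos M_pos C0 by (intro mult_left_le_one_le) auto
    finally show ?thesis .
  qed
  ultimately have "\<alpha> / 2 * (\<Sum>k<K. X k) \<le> D + M * C0 + Cf\<^sup>2 / M"
    using descent f_p0 \<Phi>_def[of 0] unfolding P_def by simp
  then have "(\<Sum>k<K. X k) \<le> 2 * (D + M * C0 + Cf\<^sup>2 / M) / \<alpha>"
    using \<alpha>_pos by (simp add: field_simps)
  also have "\<dots> = 2 * (D + M * C0 + Cf\<^sup>2 / M) * (real K * \<alpha>\<^sup>2)"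
    using \<alpha>_pos K_\<alpha> by (simp add: divide_simps power2_eq_square power3_eq_cube mult_ac)
  also have "\<dots> = real K * (2 * (D + M * C0 + Cf\<^sup>2 / M) * \<alpha>\<^sup>2)"
    by (simp only: mult_ac)
  finally have "(\<Sum>k<K. X k) \<le> real K * (2 * (D + M * C0 + Cf\<^sup>2 / M) * \<alpha>\<^sup>2)" .
  then show ?thesis
    using exists_le_of_sum_le[of "{..<K}" X] K_pos unfolding X_def by auto
qed

lemma alg_iter_kkt_le:
  fixes G :: "'a \<times> 'b \<Rightarrow> 'c::real_normed_vector"
  assumes f_bdd: "bdd_below (range f)" and h_eq: "\<And>p. h p = (norm (G p))\<^sup>2"
    and regular: "\<And>p. norm (G p) \<le> cr * norm (Dh p)"
    and C0: "C0 \<ge> 0" and h_p0: "h p0 \<le> \<alpha>\<^sup>2 * C0" and f_p0: "f p0 - Inf (range f) \<le> D"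
    and \<epsilon>: "max 1 (cr\<^sup>2 / M) * (2 * (D + M * C0 + Cf\<^sup>2 / M)) * \<alpha>\<^sup>2 \<le> \<epsilon>"
  defines "P \<equiv> alg_iter Df Dh (\<lambda>p. (norm (Dh p))\<^sup>2) \<alpha> \<alpha> p0"
  shows "\<exists>t<K. max ((norm (G (P t)))\<^sup>2)
                   ((norm (Df (P t) + alg_lambda Df Dh (\<lambda>p. (norm (Dh p))\<^sup>2) \<alpha> (P t) *\<^sub>R Dh (P t)))\<^sup>2)
                 \<le> \<epsilon>"
proof -
  let ?r = "\<lambda>t. norm (Df (P t) + alg_lambda Df Dh (\<lambda>p. (norm (Dh p))\<^sup>2) \<alpha> (P t) *\<^sub>R Dh (P t))"
  obtain t where "t < K" and residual: "(?r t)\<^sup>2 + M * (norm (Dh (P t)))\<^sup>2 \<le> 2 * (D + M * C0 + Cf\<^sup>2 / M) * \<alpha>\<^sup>2"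
    using alg_iter_residual_le[OF f_bdd _ C0 h_p0 f_p0] h_eq unfolding P_def norm_alg_direction by auto
  have "max ((norm (G (P t)))\<^sup>2) ((?r t)\<^sup>2) \<le> max 1 (cr\<^sup>2 / M) * ((?r t)\<^sup>2 + M * (norm (Dh (P t)))\<^sup>2)"
    by (rule max_sq_le_weighted_sum[OF norm_ge_zero regular M_pos])
  also have "\<dots> \<le> max 1 (cr\<^sup>2 / M) * (2 * (D + M * C0 + Cf\<^sup>2 / M) * \<alpha>\<^sup>2)"
    using residual by (intro mult_left_mono) auto
  also have "\<dots> \<le> \<epsilon>" using \<epsilon> by (simp add: mult.assoc)
  finally show ?thesis using \<open>t < K\<close> by blast
qed

end

lemma lipschitz_constant_nonneg:
  fixes F :: "'a::euclidean_space \<Rightarrow> 'b::real_normed_vector"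
  assumes "\<And>p q. norm (F p - F q) \<le> L * norm (p - q)"
  shows "L \<ge> 0"
proof -
  obtain b :: 'a where "b \<in> Basis" using nonempty_Basis by blast
  then have "norm (F b - F 0) \<le> L"
    using assms[of b 0] by simp
  then show ?thesis
    using norm_ge_zero order_trans by blast
qed

lemma mult_powr_neg_third_cube:
  fixes x :: real
  assumes "x > 0"
  shows "x * (x powr (-1/3)) ^ 3 = 1"
proof -
  have "(x powr (-1/3)) ^ 3 = x powr (of_nat 3 * (-1/3))"
    using assms by (simp add: powr_power)
  then show ?thesis
    using assms by (simp add: powr_minus_divide)
qed

lemma iteration_count_choice:
  fixes a0 C \<epsilon> :: real
  assumes a0: "a0 > 0" and C: "C > 0" and \<epsilon>: "\<epsilon> > 0"
  shows "\<exists>K::nat. K \<ge> 1 \<and> real K \<le> (1 / a0 ^ 3 + C powr (3/2) + 1) * (1 + \<epsilon> powr (-3/2))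
           \<and> real K powr (-1/3) \<le> a0 \<and> C * (real K powr (-1/3))\<^sup>2 \<le> \<epsilon>"
proof -
  define a where "a = min a0 (sqrt (\<epsilon> / C))"
  have a_pos: "a > 0" using a0 C \<epsilon> unfolding a_def by simp
  define K where "K = nat \<lceil>1 / a ^ 3\<rceil>"
  have a3_pos: "1 / a ^ 3 > 0" using a_pos by simp
  then have "real K = of_int \<lceil>1 / a ^ 3\<rceil>" unfolding K_def by simp
  then have K_ge: "real K \<ge> 1 / a ^ 3" and K_le: "real K \<le> 1 / a ^ 3 + 1"
    by linarith+
  have K_pos: "K \<ge> 1" using K_ge a3_pos by linarith
  have "1 / a ^ 3 \<le> 1 / a0 ^ 3 + C powr (3/2) * \<epsilon> powr (-3/2)"
  proof (cases "a = a0")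
    case False
    then have "a = sqrt (\<epsilon> / C)" unfolding a_def by (simp add: min_def split: if_splits)
    then have "a ^ 3 = (\<epsilon> / C) powr (3/2)"
      using \<epsilon> C by (simp add: powr_half_sqrt[symmetric] powr_power)
    then have "1 / a ^ 3 = C powr (3/2) * \<epsilon> powr (-3/2)"
      using \<epsilon> C by (simp add: powr_divide powr_minus_divide)
    then show ?thesis using a0 by simp
  qed (use C \<epsilon> in simp)
  moreover have "C powr (3/2) * \<epsilon> powr (-3/2) \<le> (1 / a0 ^ 3 + C powr (3/2) + 1) * \<epsilon> powr (-3/2)"
    using a0 by (intro mult_right_mono) auto
  ultimately have "real K \<le> (1 / a0 ^ 3 + C powr (3/2) + 1) + (1 / a0 ^ 3 + C powr (3/2) + 1) * \<epsilon> powr (-3/2)"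
    using K_le powr_ge_zero[of C "3/2"] by linarith
  then have "real K \<le> (1 / a0 ^ 3 + C powr (3/2) + 1) * (1 + \<epsilon> powr (-3/2))"
    by (simp add: distrib_left)
  moreover have "real K powr (-1/3) \<le> a"
  proof -
    have "real K * (real K powr (-1/3)) ^ 3 \<le> real K * a ^ 3"
      using mult_powr_neg_third_cube[of "real K"] K_pos K_ge a_pos by (simp add: field_simps)
    then have "(real K powr (-1/3)) ^ 3 \<le> a ^ 3"
      using K_pos by simp
    then show ?thesis
      using power_mono_iff[of "real K powr (-1/3)" a 3] a_pos by simp
  qed
  moreover have "C * a\<^sup>2 \<le> \<epsilon>"
  proof -
    have "a\<^sup>2 \<le> (sqrt (\<epsilon> / C))\<^sup>2"
      using a_pos unfolding a_def by (intro power_mono) auto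
    then show ?thesis using C \<epsilon> by (simp add: field_simps)
  qed
  moreover have "C * (real K powr (-1/3))\<^sup>2 \<le> C * a\<^sup>2"
    using \<open>real K powr (-1/3) \<le> a\<close> C by (intro mult_left_mono power_mono) auto
  ultimately show ?thesis
    using K_pos by (intro exI[of _ K]) (auto simp: a_def)
qed

lemma step_size_bounds:
  fixes \<alpha> L M :: real
  assumes "\<alpha> > 0" "\<alpha> \<le> min (1 / (2 * L + 1)) (sqrt (M / 4))" "L \<ge> 0" "M > 0"
  shows "L * \<alpha> \<le> 1/2" "\<alpha>\<^sup>2 \<le> M / 4"
proof -
  have "L * \<alpha> \<le> L * (1 / (2 * L + 1))"
    using assms by (intro mult_left_mono) auto
  also have "\<dots> \<le> 1/2" using assms(3) by (simp add: field_simps)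
  finally show "L * \<alpha> \<le> 1/2" .
  have "\<alpha>\<^sup>2 \<le> (sqrt (M / 4))\<^sup>2"
    using assms by (intro power_mono) auto
  then show "\<alpha>\<^sup>2 \<le> M / 4" using assms(4) by simp
qed

lemma step_size_choice:
  fixes Lf Lh M C \<epsilon> :: real
  assumes Lf: "Lf \<ge> 0" and Lh: "Lh > 0" and M_Lh: "M * Lh = 1/2" and C: "C > 0" and \<epsilon>: "\<epsilon> > 0"
  defines "\<alpha>0 \<equiv> min (1 / (2 * Lf + 1)) (sqrt (M / 4))"
  obtains K :: nat and \<alpha> :: real
  where "\<alpha> = real K powr (-1/3)" "K \<ge> 1"
    "real K \<le> (1 / \<alpha>0 ^ 3 + C powr (3/2) + 1) * (1 + \<epsilon> powr (-3/2))"
    "\<alpha> > 0" "real K * \<alpha> ^ 3 = 1" "Lf * \<alpha> \<le> 1/2" "\<alpha>\<^sup>2 \<le> M / 4" "C * \<alpha>\<^sup>2 \<le> \<epsilon>"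
    "min \<alpha> (1 / (Lf + \<alpha> * Lh)) = \<alpha>"
proof -
  have "M * Lh > 0" using M_Lh by simp
  then have M_pos: "M > 0" using Lh by (simp add: zero_less_mult_iff)
  have "\<alpha>0 > 0" using Lf M_pos by (simp add: \<alpha>0_def)
  then obtain K where K: "K \<ge> 1" "real K \<le> (1 / \<alpha>0 ^ 3 + C powr (3/2) + 1) * (1 + \<epsilon> powr (-3/2))"
    and \<alpha>_\<alpha>0: "real K powr (-1/3) \<le> \<alpha>0" and \<alpha>_\<epsilon>: "C * (real K powr (-1/3))\<^sup>2 \<le> \<epsilon>"
    using iteration_count_choice[OF _ C \<epsilon>] by blast
  define \<alpha> where "\<alpha> = real K powr (-1/3)"
  have \<alpha>_pos: "\<alpha> > 0" using K by (simp add: \<alpha>_def)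
  have K_\<alpha>: "real K * \<alpha> ^ 3 = 1"
    unfolding \<alpha>_def using K by (intro mult_powr_neg_third_cube) simp
  note \<alpha>_bounds = step_size_bounds[OF \<alpha>_pos \<alpha>_\<alpha>0[folded \<alpha>_def, unfolded \<alpha>0_def] Lf M_pos]
  have "\<alpha>\<^sup>2 * Lh \<le> M / 4 * Lh"
    using \<alpha>_bounds(2) Lh by (intro mult_right_mono) auto
  then have "\<alpha> * (Lf + \<alpha> * Lh) \<le> 1"
    using \<alpha>_bounds(1) M_Lh by (simp add: algebra_simps power2_eq_square)
  moreover have "Lf + \<alpha> * Lh > 0" using \<alpha>_pos Lf Lh by (simp add: add_nonneg_pos)
  ultimately have "min \<alpha> (1 / (Lf + \<alpha> * Lh)) = \<alpha>"
    by (simp add: min_def pos_le_divide_eq)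
  then show ?thesis
    using that[OF \<alpha>_def K \<alpha>_pos K_\<alpha> \<alpha>_bounds] \<alpha>_\<epsilon> unfolding \<alpha>_def by blast
qed

theorem mainTheorem4:
  fixes f g h :: "(real^'n::finite) \<times> (real^'m::finite) \<Rightarrow> real"
    and Df Dg Dh :: "(real^'n::finite) \<times> (real^'m::finite) \<Rightarrow> (real^'n::finite) \<times> (real^'m::finite)"
    and D2g :: "(real^'n::finite) \<times> (real^'m::finite) \<Rightarrow> ((real^'n::finite) \<times> (real^'m::finite)) \<Rightarrow>\<^sub>L ((real^'n::finite) \<times> (real^'m::finite))"
    and Lf Lh Cf cr C0 D :: real
  assumes f_grad: "\<And>p. (f has_derivative (\<lambda>v. Df p \<bullet> v)) (at p)"
    and f_C1: "continuous_on UNIV Df"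
    and f_bdd: "bdd_below (range f)"
    and f_lip: "\<And>p q. norm (Df p - Df q) \<le> Lf * norm (p - q)"
    and f_gbd: "\<And>p. norm (Df p) \<le> Cf"
    and g_grad: "\<And>p. (g has_derivative (\<lambda>v. Dg p \<bullet> v)) (at p)"
    and g_hess: "\<And>p. (Dg has_derivative blinfun_apply (D2g p)) (at p)"
    and g_C2: "continuous_on UNIV D2g"
    and h_def: "\<And>p. h p = (norm (snd (Dg p)))\<^sup>2"
    and h_grad: "\<And>p. (h has_derivative (\<lambda>v. Dh p \<bullet> v)) (at p)"
    and h_C1: "continuous_on UNIV Dh"
    and Lh_pos: "Lh > 0"
    and h_lip: "\<And>p q. norm (Dh p - Dh q) \<le> Lh * norm (p - q)"
    and cr_pos: "cr > 0"
    and regular: "\<And>p. norm (snd (Dg p)) \<le> cr * norm (Dh p)"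
    and C0_pos: "C0 > 0"
  shows "\<exists>c>0. \<forall>\<epsilon>>0. \<exists>K::nat. K \<ge> 1 \<and> real K \<le> c * (1 + \<epsilon> powr (-3/2)) \<and>
           (let \<alpha> = real K powr (-1/3);
                \<gamma> = min \<alpha> (1 / (Lf + \<alpha> * Lh));
                \<rho> = (\<lambda>p. (norm (Dh p))\<^sup>2)
            in \<forall>p0. h p0 \<le> \<alpha>\<^sup>2 * C0 \<and> f p0 - Inf (range f) \<le> D \<longrightarrow>
                 (\<exists>t<K. let pt = alg_iter Df Dh \<rho> \<alpha> \<gamma> p0 t;
                            lt = alg_lambda Df Dh \<rho> \<alpha> pt
                        in max ((norm (snd (Dg pt)))\<^sup>2) ((norm (Df pt + lt *\<^sub>R Dh pt))\<^sup>2) \<le> \<epsilon>))"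
proof -
  have Lf_nonneg: "Lf \<ge> 0" by (rule lipschitz_constant_nonneg[OF f_lip])
  define M where "M = 1 / (2 * Lh)"
  have M_pos: "M > 0" and M_Lh: "M * Lh = 1/2" using Lh_pos by (simp_all add: M_def)
  define S where "S = max D 0 + M * C0 + Cf\<^sup>2 / M"
  define C where "C = max 1 (cr\<^sup>2 / M) * (2 * S)"
  define \<alpha>0 where "\<alpha>0 = min (1 / (2 * Lf + 1)) (sqrt (M / 4))"
  have "S > 0" using M_pos C0_pos by (simp add: S_def add_nonneg_pos add_pos_nonneg)
  then have C_pos: "C > 0" by (simp add: C_def max_def)
  show ?thesis
  proof (intro exI[of _ "1 / \<alpha>0 ^ 3 + C powr (3/2) + 1"] conjI allI impI, goal_cases)
    case 1
    have "1 / \<alpha>0 ^ 3 > 0" using Lf_nonneg M_pos by (simp add: \<alpha>0_def)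
    then show ?case using powr_ge_zero[of C "3/2"] by linarith
  next
    case (2 \<epsilon>)
    obtain K \<alpha> where \<alpha>_def: "\<alpha> = real K powr (-1/3)" and K: "K \<ge> 1"
      "real K \<le> (1 / \<alpha>0 ^ 3 + C powr (3/2) + 1) * (1 + \<epsilon> powr (-3/2))"
      and \<alpha>_pos: "\<alpha> > 0" and K_\<alpha>: "real K * \<alpha> ^ 3 = 1"
      and \<alpha>_Lf: "Lf * \<alpha> \<le> 1/2" and \<alpha>_M: "\<alpha>\<^sup>2 \<le> M / 4" and \<alpha>_\<epsilon>: "C * \<alpha>\<^sup>2 \<le> \<epsilon>"
      and \<gamma>: "min \<alpha> (1 / (Lf + \<alpha> * Lh)) = \<alpha>"
      using step_size_choice[OF Lf_nonneg Lh_pos M_Lh C_pos 2, folded \<alpha>0_def] by blast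
    interpret penalty_step_parameters f h Df Dh Lf Lh Cf \<alpha> M K
      using f_grad f_lip f_gbd h_grad h_lip \<alpha>_pos M_pos M_Lh \<alpha>_Lf \<alpha>_M K_\<alpha> by unfold_locales
    define \<rho> where "\<rho> = (\<lambda>p. (norm (Dh p))\<^sup>2)"
    have "\<exists>t<K. max ((norm (snd (Dg (alg_iter Df Dh \<rho> \<alpha> \<alpha> p0 t))))\<^sup>2)
                   ((norm (Df (alg_iter Df Dh \<rho> \<alpha> \<alpha> p0 t)
                      + alg_lambda Df Dh \<rho> \<alpha> (alg_iter Df Dh \<rho> \<alpha> \<alpha> p0 t) *\<^sub>R Dh (alg_iter Df Dh \<rho> \<alpha> \<alpha> p0 t)))\<^sup>2)
                 \<le> \<epsilon>"
      if "h p0 \<le> \<alpha>\<^sup>2 * C0" and "f p0 - Inf (range f) \<le> D" for p0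
      using alg_iter_kkt_le[OF f_bdd h_def regular, of C0 p0 "max D 0" \<epsilon>] that C0_pos \<alpha>_\<epsilon>
      unfolding \<rho>_def C_def S_def by (simp add: mult.assoc)
    then show ?case
      using K unfolding Let_def
      by (intro exI[of _ K]) (unfold \<alpha>_def[symmetric] \<gamma> \<rho>_def[symmetric], blast)
  qed
qed

end
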